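(* Let $n\geq 1$ and let $M$ be a complex $n\times n$ matrix. Then $M$ is a complex Hadamard matrix if and only if every entry of $M$ has complex norm $1$ and every eigenvalue of $M$ has complex norm $\sqrt{n}$.
   Context: A complex Hadamard matrix of order $n$ is an $n\times n$ complex matrix $M$ all of whose entries have complex norm $1$ and which satisfies $MM^{\ast}=nI_n$, where $M^\ast$ is the conjugate transpose of $M$ and $I_n$ the identity matrix. *)

theory Defs
  imports "Jordan_Normal_Form.Char_Poly"
begin

definition conj_transpose :: "complex mat \<Rightarrow> complex mat" where
  "conj_transpose M = mat (dim_col M) (dim_row M) (\<lambda>(i,j). cnj (M $$ (j,i)))"

definition complex_hadamard :: "nat \<Rightarrow> complex mat \<Rightarrow> bool" where
  "complex_hadamard n M \<longleftrightarrow> M \<in> carrier_mat n n \<and>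
     (\<forall>i<n. \<forall>j<n. cmod (M $$ (i,j)) = 1) \<and>
     M * conj_transpose M = of_nat n \<cdot>\<^sub>m 1\<^sub>m n"

end

theory Submission
  imports Defs "Jordan_Normal_Form.Schur_Decomposition"
begin

(* If M M^* = n I, then also M^* M = n I, and M v = e v gives |e|^2 |v|^2 = |M v|^2 = n |v|^2.
   Conversely, put A = M M^*. Unimodular entries make every diagonal entry of A equal to n, so
   trace A = n^2, while det A = |det M|^2 = n^n because det M is the product of the eigenvalues
   of M. The eigenvalues of A are nonnegative reals with arithmetic and geometric mean both n, so
   by the equality case of AM-GM they all equal n and trace (A^2) = n^3. As A is Hermitian,
   trace (A^2) is the sum of all |A_ij|^2; the diagonal alone contributes n^3, so A = n I. *)

lemma arith_geo_mean_eq_imp_const: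
  fixes r :: "'a \<Rightarrow> real"
  assumes I: "finite I" and c: "c > 0" and nonneg: "\<And>i. i \<in> I \<Longrightarrow> r i \<ge> 0"
    and sum: "sum r I = real (card I) * c" and prod: "prod r I = c ^ card I"
    and i: "i \<in> I"
  shows "r i = c"
proof -
  define y where "y j = r j / c" for j
  have pos: "y j > 0" if "j \<in> I" for j
  proof -
    have "prod r I \<noteq> 0" using prod c by simp
    hence "r j \<noteq> 0" using I that by simp
    thus ?thesis using nonneg[OF that] c by (simp add: y_def)
  qed
  have "(\<Prod>j\<in>I. y j) = 1"
    using prod c by (simp add: y_def prod_dividef)
  moreover have "ln (\<Prod>j\<in>I. y j) = (\<Sum>j\<in>I. ln (y j))"
    by (rule ln_prod[OF I]) (use pos in fastforce)
  ultimately have sum_ln: "(\<Sum>j\<in>I. ln (y j)) = 0" by simp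
  have sum_y: "(\<Sum>j\<in>I. y j) = real (card I)"
    using sum c by (simp add: y_def flip: sum_divide_distrib)
  \<comment> \<open>each term \<open>y - 1 - ln y\<close> is nonnegative and vanishes only at \<open>y = 1\<close>\<close>
  have "(\<Sum>j\<in>I. y j - 1 - ln (y j)) = 0"
    using sum_ln sum_y by (simp add: sum_subtractf)
  moreover have "y j - 1 - ln (y j) \<ge> 0" if "j \<in> I" for j
    using ln_le_minus_one[OF pos[OF that]] by simp
  ultimately have "\<forall>j\<in>I. y j - 1 - ln (y j) = 0"
    by (simp add: sum_nonneg_eq_0_iff[OF I])
  hence "ln (y i) = y i - 1" using i by simp
  hence "y i = 1" using ln_eq_minus_one[OF pos[OF i]] by blast
  thus ?thesis using c by (simp add: y_def)
qed

definition trace :: "'a::semiring_0 mat \<Rightarrow> 'a" where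
  "trace A = (\<Sum>i<dim_row A. A $$ (i,i))"

lemma trace_mult_comm:
  fixes A B :: "'a::comm_semiring_0 mat"
  assumes A: "A \<in> carrier_mat n m" and B: "B \<in> carrier_mat m n"
  shows "trace (A * B) = trace (B * A)"
proof -
  have "trace (A * B) = (\<Sum>i<n. \<Sum>k<m. A $$ (i,k) * B $$ (k,i))"
    using A B by (auto simp: trace_def scalar_prod_def row_def col_def lessThan_atLeast0 intro!: sum.cong)
  also have "\<dots> = (\<Sum>k<m. \<Sum>i<n. B $$ (k,i) * A $$ (i,k))"
    by (subst sum.swap) (simp add: ac_simps)
  also have "\<dots> = trace (B * A)"
    using A B by (auto simp: trace_def scalar_prod_def row_def col_def lessThan_atLeast0 intro!: sum.cong)
  finally show ?thesis .
qed

lemma trace_similar_mat_wit: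
  fixes A B :: "'a::comm_ring_1 mat"
  assumes "similar_mat_wit A B P Q"
  shows "trace A = trace B"
proof -
  define n where "n = dim_row A"
  from similar_mat_witD[OF n_def assms] have B: "B \<in> carrier_mat n n"
    and P: "P \<in> carrier_mat n n" and Q: "Q \<in> carrier_mat n n"
    and QP: "Q * P = 1\<^sub>m n" and AB: "A = P * B * Q"
    by auto
  have "trace A = trace ((P * B) * Q)" using AB by simp
  also have "\<dots> = trace (Q * (P * B))" using P B Q by (intro trace_mult_comm) auto
  also have "Q * (P * B) = (Q * P) * B" using P B Q by simp
  also have "\<dots> = B" using B QP by simp
  finally show ?thesis .
qed

lemma upper_triangular_mult_diag:
  fixes B C :: "'a::semiring_0 mat"
  assumes B: "B \<in> carrier_mat n n" "upper_triangular B"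
    and C: "C \<in> carrier_mat n n" "upper_triangular C" and i: "i < n"
  shows "(B * C) $$ (i,i) = B $$ (i,i) * C $$ (i,i)"
proof -
  have "(B * C) $$ (i,i) = (\<Sum>k\<in>{0..<n}. B $$ (i,k) * C $$ (k,i))"
    using B C i by (simp add: scalar_prod_def)
  also have "\<dots> = B $$ (i,i) * C $$ (i,i)"
  proof -
    have "B $$ (i,k) * C $$ (k,i) = 0" if "k < n" "k \<noteq> i" for k
      using B C i that by (cases "k < i") (simp_all add: upper_triangularD)
    thus ?thesis using i by (subst sum.remove[of _ i]) auto
  qed
  finally show ?thesis .
qed

lemma complex_mat_eigenvalues_det_trace:
  fixes A :: "complex mat"
  assumes A: "A \<in> carrier_mat n n"
  obtains ev where "\<And>i. i < n \<Longrightarrow> eigenvalue A (ev i)"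
    and "det A = (\<Prod>i<n. ev i)" and "trace A = (\<Sum>i<n. ev i)"
    and "trace (A * A) = (\<Sum>i<n. ev i ^ 2)"
proof -
  obtain es where char_poly: "char_poly A = (\<Prod>a\<leftarrow>es. [:- a, 1:])"
    using char_poly_factorized[OF A] by blast
  obtain B P Q where schur: "schur_decomposition A es = (B,P,Q)"
    by (cases "schur_decomposition A es") auto
  from schur_decomposition[OF A char_poly schur] have sim: "similar_mat_wit A B P Q"
    and triangular: "upper_triangular B" and diag: "diag_mat B = es" by auto
  have B: "B \<in> carrier_mat n n" using similar_mat_witD2[OF A sim] by auto
  have eigen: "eigenvalue A (B $$ (i,i))" if "i < n" for i
  proof -
    have "B $$ (i,i) \<in> set es" using diag B that by (auto simp: diag_mat_def)
    hence "poly (char_poly A) (B $$ (i,i)) = 0"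
      unfolding char_poly poly_prod_list by auto
    thus ?thesis using eigenvalue_root_char_poly[OF A] by simp
  qed
  have "det A = det B" using det_similar sim unfolding similar_mat_def by blast
  also have "\<dots> = (\<Prod>i<n. B $$ (i,i))"
    using det_upper_triangular[OF triangular B] B by (simp add: prod_list_diag_prod lessThan_atLeast0)
  finally have det_A: "det A = (\<Prod>i<n. B $$ (i,i))" .
  have trace_A: "trace A = (\<Sum>i<n. B $$ (i,i))"
    using trace_similar_mat_wit[OF sim] B by (simp add: trace_def)
  have "similar_mat_wit (A ^\<^sub>m 2) (B ^\<^sub>m 2) P Q" by (rule similar_mat_wit_pow[OF sim])
  hence "similar_mat_wit (A * A) (B * B) P Q"
    using A B by (simp add: numeral_2_eq_2)
  hence "trace (A * A) = trace (B * B)" by (rule trace_similar_mat_wit)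
  also have "\<dots> = (\<Sum>i<n. B $$ (i,i) ^ 2)"
    using B triangular upper_triangular_mult_diag[OF B triangular B triangular]
    by (simp add: trace_def power2_eq_square del: index_mult_mat(1))
  finally have "trace (A * A) = (\<Sum>i<n. B $$ (i,i) ^ 2)" .
  with eigen det_A trace_A show ?thesis by (rule that)
qed

lemma conj_transpose_carrier_mat [simp]:
  "M \<in> carrier_mat n m \<Longrightarrow> conj_transpose M \<in> carrier_mat m n"
  by (auto simp: conj_transpose_def)

lemma dim_conj_transpose [simp]:
  "dim_row (conj_transpose M) = dim_col M" "dim_col (conj_transpose M) = dim_row M"
  by (simp_all add: conj_transpose_def)

lemma index_conj_transpose [simp]:
  "i < dim_col M \<Longrightarrow> j < dim_row M \<Longrightarrow> conj_transpose M $$ (i,j) = cnj (M $$ (j,i))"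
  by (simp add: conj_transpose_def)

lemma det_conj_transpose:
  assumes "M \<in> carrier_mat n n"
  shows "det (conj_transpose M) = cnj (det M)"
proof -
  interpret cnj: comm_ring_hom cnj by unfold_locales auto
  have "conj_transpose M = map_mat cnj (transpose_mat M)" by (rule eq_matI) auto
  thus ?thesis using assms by (simp add: det_transpose)
qed

lemma index_mult_conj_transpose:
  assumes "M \<in> carrier_mat n m" and "i < n" and "j < n"
  shows "(M * conj_transpose M) $$ (i,j) = (\<Sum>k<m. M $$ (i,k) * cnj (M $$ (j,k)))"
  using assms by (auto simp: scalar_prod_def lessThan_atLeast0 intro!: sum.cong)

lemma cscalar_prod_conj_transpose:
  assumes M: "M \<in> carrier_mat n m" and x: "x \<in> carrier_vec m" and w: "w \<in> carrier_vec n"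
  shows "(M *\<^sub>v x) \<bullet>c w = x \<bullet>c (conj_transpose M *\<^sub>v w)"
proof -
  have "(M *\<^sub>v x) \<bullet>c w = (\<Sum>i<n. (\<Sum>k<m. M $$ (i,k) * x $ k) * cnj (w $ i))"
    using M x w by (auto simp: scalar_prod_def lessThan_atLeast0 intro!: sum.cong)
  also have "\<dots> = (\<Sum>i<n. \<Sum>k<m. M $$ (i,k) * x $ k * cnj (w $ i))"
    by (simp add: sum_distrib_right)
  also have "\<dots> = (\<Sum>k<m. x $ k * cnj (\<Sum>i<n. cnj (M $$ (i,k)) * w $ i))"
    by (subst sum.swap) (simp add: sum_distrib_left ac_simps)
  also have "\<dots> = x \<bullet>c (conj_transpose M *\<^sub>v w)"
    using M x w by (auto simp: scalar_prod_def lessThan_atLeast0 intro!: sum.cong)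
  finally show ?thesis .
qed

lemma smult_one_mult_mat_vec:
  "v \<in> carrier_vec n \<Longrightarrow> (k \<cdot>\<^sub>m 1\<^sub>m n) *\<^sub>v v = (k :: 'a :: comm_semiring_1) \<cdot>\<^sub>v v"
  by (rule eq_vecI) (auto simp: scalar_prod_def if_distrib if_distribR cong: if_cong)

lemma conj_transpose_mult_eq_smult_one:
  assumes M: "M \<in> carrier_mat n n" and c: "c \<noteq> 0"
    and right: "M * conj_transpose M = c \<cdot>\<^sub>m 1\<^sub>m n"
  shows "conj_transpose M * M = c \<cdot>\<^sub>m 1\<^sub>m n"
proof -
  have cancel: "c \<cdot>\<^sub>m (inverse c \<cdot>\<^sub>m A) = A" for A :: "complex mat"
    using c by (intro eq_matI) simp_all
  let ?N = "inverse c \<cdot>\<^sub>m conj_transpose M"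
  have "M * ?N = inverse c \<cdot>\<^sub>m (M * conj_transpose M)"
    using M by (intro mult_smult_distrib) auto
  also have "\<dots> = inverse c \<cdot>\<^sub>m (c \<cdot>\<^sub>m 1\<^sub>m n)" by (simp only: right)
  also have "\<dots> = 1\<^sub>m n" using c by (intro eq_matI) simp_all
  finally have "M * ?N = 1\<^sub>m n" .
  hence left_inverse: "?N * M = 1\<^sub>m n"
    by (intro mat_mult_left_right_inverse[OF M]) (use M in simp_all)
  have "conj_transpose M * M = c \<cdot>\<^sub>m (inverse c \<cdot>\<^sub>m (conj_transpose M * M))"
    by (simp only: cancel)
  also have "inverse c \<cdot>\<^sub>m (conj_transpose M * M) = ?N * M"
    by (rule mult_smult_assoc_mat[of _ n n, symmetric]) (use M in simp_all)
  finally show ?thesis by (simp only: left_inverse)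
qed

lemma eigenvalue_cmod_square:
  assumes M: "M \<in> carrier_mat n n"
    and left: "conj_transpose M * M = complex_of_real c \<cdot>\<^sub>m 1\<^sub>m n"
    and e: "eigenvalue M e"
  shows "cmod e ^ 2 = c"
proof -
  obtain v where v: "v \<in> carrier_vec n" "v \<noteq> 0\<^sub>v n" and ev: "M *\<^sub>v v = e \<cdot>\<^sub>v v"
    using e M unfolding eigenvalue_def eigenvector_def by auto
  have "e * cnj e * (v \<bullet>c v) = (M *\<^sub>v v) \<bullet>c (M *\<^sub>v v)"
    using v by (simp add: ev conjugate_smult_vec ac_simps)
  also have "\<dots> = v \<bullet>c ((conj_transpose M * M) *\<^sub>v v)"
    using M v by (simp add: cscalar_prod_conj_transpose[of _ n n] assoc_mult_mat_vec[of _ n n])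
  also have "\<dots> = complex_of_real c * (v \<bullet>c v)"
    using v by (simp add: left smult_one_mult_mat_vec conjugate_smult_vec)
  finally have "e * cnj e = complex_of_real c" using v by simp
  hence "complex_of_real (cmod e ^ 2) = complex_of_real c" by (simp only: complex_norm_square)
  thus ?thesis by (simp only: of_real_eq_iff)
qed

lemma det_mult_conj_transpose:
  assumes M: "M \<in> carrier_mat n n"
  shows "det (M * conj_transpose M) = complex_of_real (cmod (det M) ^ 2)"
proof -
  have "det (M * conj_transpose M) = det M * cnj (det M)"
    using M by (simp add: det_mult[of _ n] det_conj_transpose)
  thus ?thesis by (simp only: complex_norm_square)
qed

lemma cmod_det_eq_power:
  fixes M :: "complex mat"
  assumes M: "M \<in> carrier_mat n n" and s: "\<And>e. eigenvalue M e \<Longrightarrow> cmod e = s"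
  shows "cmod (det M) = s ^ n"
proof -
  obtain ev where "\<And>i. i < n \<Longrightarrow> eigenvalue M (ev i)" and "det M = (\<Prod>i<n. ev i)"
    using complex_mat_eigenvalues_det_trace[OF M] by metis
  thus ?thesis using s by (simp flip: prod_norm)
qed

lemma conj_transpose_mult_conj_transpose:
  assumes "M \<in> carrier_mat n m"
  shows "conj_transpose (M * conj_transpose M) = M * conj_transpose M"
  using assms
  by (intro eq_matI) (auto simp: index_mult_conj_transpose[of _ n m] ac_simps simp del: index_mult_mat(1))

lemma complex_nonneg_if_mult_pos_nonneg:
  fixes mu s :: complex
  assumes "0 < s" and "0 \<le> mu * s"
  shows "0 \<le> mu"
  using assms by (auto simp: less_eq_complex_def less_complex_def) (metis zero_le_mult_iff not_le)

lemma eigenvalue_mult_conj_transpose_nonneg: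
  assumes M: "M \<in> carrier_mat n m" and mu: "eigenvalue (M * conj_transpose M) mu"
  shows "mu \<ge> 0"
proof -
  let ?A = "M * conj_transpose M"
  obtain v where v: "v \<in> carrier_vec n" "v \<noteq> 0\<^sub>v n" and ev: "?A *\<^sub>v v = mu \<cdot>\<^sub>v v"
    using mu M unfolding eigenvalue_def eigenvector_def by auto
  let ?w = "conj_transpose M *\<^sub>v v"
  have w: "?w \<in> carrier_vec m" by (rule mult_mat_vec_carrier[of _ m n]) (use M v in simp_all)
  have "mu * (v \<bullet>c v) = (?A *\<^sub>v v) \<bullet>c v" using v by (simp add: ev)
  also have "\<dots> = (M *\<^sub>v ?w) \<bullet>c v"
    using assoc_mult_mat_vec[OF M conj_transpose_carrier_mat[OF M] v(1)] by simp
  also have "\<dots> = ?w \<bullet>c ?w" by (rule cscalar_prod_conj_transpose[OF M w v(1)])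
  finally have eq: "mu * (v \<bullet>c v) = ?w \<bullet>c ?w" .
  have "v \<bullet>c v > 0" using v by simp
  moreover have "mu * (v \<bullet>c v) \<ge> 0" unfolding eq by blast
  ultimately show ?thesis by (rule complex_nonneg_if_mult_pos_nonneg)
qed

lemma trace_square_hermitian:
  assumes A: "A \<in> carrier_mat n n" and herm: "conj_transpose A = A"
  shows "trace (A * A) = complex_of_real (\<Sum>i<n. \<Sum>j<n. cmod (A $$ (i,j)) ^ 2)"
proof -
  have sym: "A $$ (j,i) = cnj (A $$ (i,j))" if "i < n" "j < n" for i j
    using arg_cong[OF herm, of "\<lambda>B. B $$ (j,i)"] A that by simp
  have "trace (A * A) = (\<Sum>i<n. \<Sum>j<n. A $$ (i,j) * A $$ (j,i))"
    using A by (auto simp: trace_def scalar_prod_def row_def col_def lessThan_atLeast0 intro!: sum.cong)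
  also have "\<dots> = (\<Sum>i<n. \<Sum>j<n. complex_of_real (cmod (A $$ (i,j)) ^ 2))"
  proof (intro sum.cong refl)
    fix i j assume "i \<in> {..<n}" "j \<in> {..<n}"
    hence "A $$ (i,j) * A $$ (j,i) = A $$ (i,j) * cnj (A $$ (i,j))" using sym[of i j] by simp
    thus "A $$ (i,j) * A $$ (j,i) = complex_of_real (cmod (A $$ (i,j)) ^ 2)"
      by (simp only: complex_norm_square)
  qed
  finally show ?thesis by simp
qed

lemma hermitian_eq_smult_one:
  assumes A: "A \<in> carrier_mat n n" and herm: "conj_transpose A = A"
    and diag: "\<And>i. i < n \<Longrightarrow> A $$ (i,i) = complex_of_real c"
    and trace: "trace (A * A) = complex_of_real (real n * c ^ 2)"
  shows "A = complex_of_real c \<cdot>\<^sub>m 1\<^sub>m n"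
proof -
  define q where "q i j = cmod (A $$ (i,j)) ^ 2" for i j
  have q_nonneg: "q i j \<ge> 0" for i j by (simp add: q_def)
  have "(\<Sum>i<n. \<Sum>j<n. q i j) = real n * c ^ 2"
    using trace_square_hermitian[OF A herm] trace unfolding q_def by (simp only: of_real_eq_iff)
  moreover have "(\<Sum>j<n. q i j) = c ^ 2 + (\<Sum>j\<in>{..<n} - {i}. q i j)" if "i < n" for i
    using that diag by (subst sum.remove[of _ i]) (auto simp: q_def)
  ultimately have "(\<Sum>i<n. \<Sum>j\<in>{..<n} - {i}. q i j) = 0"
    by (simp add: sum.distrib)
  hence "\<forall>i<n. \<forall>j\<in>{..<n} - {i}. q i j = 0"
    by (simp add: sum_nonneg_eq_0_iff sum_nonneg q_nonneg)
  hence off_diag: "A $$ (i,j) = 0" if "i < n" "j < n" "i \<noteq> j" for i j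
    using that by (simp add: q_def)
  show ?thesis by (rule eq_matI) (use A diag off_diag in auto)
qed

lemma trace_square_mult_conj_transpose_if_trace_det:
  fixes M :: "complex mat"
  assumes M: "M \<in> carrier_mat n n" and c: "c > 0"
    and trace: "trace (M * conj_transpose M) = complex_of_real (real n * c)"
    and det: "det (M * conj_transpose M) = complex_of_real (c ^ n)"
  shows "trace ((M * conj_transpose M) * (M * conj_transpose M)) = complex_of_real (real n * c ^ 2)"
proof -
  let ?A = "M * conj_transpose M"
  obtain ev where ev: "\<And>i. i < n \<Longrightarrow> eigenvalue ?A (ev i)"
    and det_ev: "det ?A = (\<Prod>i<n. ev i)" and trace_ev: "trace ?A = (\<Sum>i<n. ev i)"
    and trace_square_ev: "trace (?A * ?A) = (\<Sum>i<n. ev i ^ 2)"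
    using complex_mat_eigenvalues_det_trace[of ?A n] M by auto
  define r where "r i = Re (ev i)" for i
  have ev_real: "ev i = complex_of_real (r i)" and r_nonneg: "r i \<ge> 0" if "i < n" for i
    using eigenvalue_mult_conj_transpose_nonneg[OF M ev[OF that]]
    by (auto simp: r_def less_eq_complex_def complex_eq_iff)
  have "complex_of_real (\<Sum>i<n. r i) = complex_of_real (real n * c)"
    using trace trace_ev ev_real by simp
  hence sum_r: "(\<Sum>i<n. r i) = real (card {..<n}) * c" by (simp only: of_real_eq_iff) simp
  have "complex_of_real (\<Prod>i<n. r i) = complex_of_real (c ^ n)"
    using det det_ev ev_real by simp
  hence prod_r: "(\<Prod>i<n. r i) = c ^ card {..<n}" by (simp only: of_real_eq_iff) simp
  have "r i = c" if "i < n" for i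
    using arith_geo_mean_eq_imp_const[OF _ c _ sum_r prod_r] r_nonneg that by simp
  thus ?thesis using trace_square_ev ev_real by simp
qed

lemma mult_conj_transpose_eq_smult_one_if_eigenvalues:
  fixes M :: "complex mat"
  assumes n: "n > 0" and M: "M \<in> carrier_mat n n"
    and unimodular: "\<And>i j. i < n \<Longrightarrow> j < n \<Longrightarrow> cmod (M $$ (i,j)) = 1"
    and eigen: "\<And>e. eigenvalue M e \<Longrightarrow> cmod e = sqrt (real n)"
  shows "M * conj_transpose M = of_nat n \<cdot>\<^sub>m 1\<^sub>m n"
proof -
  let ?A = "M * conj_transpose M"
  have A: "?A \<in> carrier_mat n n" using M by simp
  have diag: "?A $$ (i,i) = complex_of_real (real n)" if "i < n" for i
  proof -
    have "?A $$ (i,i) = (\<Sum>k<n. M $$ (i,k) * cnj (M $$ (i,k)))"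
      by (rule index_mult_conj_transpose[OF M that that])
    also have "\<dots> = (\<Sum>k<n. complex_of_real (cmod (M $$ (i,k)) ^ 2))"
      by (simp only: complex_norm_square)
    finally show ?thesis using unimodular that by simp
  qed
  have "trace ?A = complex_of_real (real n * real n)"
    using M diag by (simp add: trace_def del: index_mult_mat(1))
  moreover have "(sqrt (real n) ^ n) ^ 2 = real n ^ n"
    by (simp add: power_mult[symmetric] mult.commute[of n] power_mult)
  hence "det ?A = complex_of_real (real n ^ n)"
    using det_mult_conj_transpose[OF M] cmod_det_eq_power[OF M eigen] by simp
  ultimately have "trace (?A * ?A) = complex_of_real (real n * real n ^ 2)"
    using n by (intro trace_square_mult_conj_transpose_if_trace_det[OF M]) simp_all
  from hermitian_eq_smult_one[OF A conj_transpose_mult_conj_transpose[OF M] diag this]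
  show ?thesis by simp
qed

theorem lemma2p2:
  fixes n :: nat and M :: "complex mat"
  assumes "n \<ge> 1" and "M \<in> carrier_mat n n"
  shows "complex_hadamard n M \<longleftrightarrow>
    ((\<forall>i<n. \<forall>j<n. cmod (M $$ (i,j)) = 1) \<and>
     (\<forall>ev. eigenvalue M ev \<longrightarrow> cmod ev = sqrt (real n)))"
proof
  assume "complex_hadamard n M"
  hence unimodular: "\<forall>i<n. \<forall>j<n. cmod (M $$ (i,j)) = 1"
    and right: "M * conj_transpose M = of_nat n \<cdot>\<^sub>m 1\<^sub>m n"
    by (simp_all add: complex_hadamard_def)
  have left: "conj_transpose M * M = complex_of_real (real n) \<cdot>\<^sub>m 1\<^sub>m n"
    using conj_transpose_mult_eq_smult_one[OF assms(2) _ right] assms(1) by simp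
  have "cmod e = sqrt (real n)" if "eigenvalue M e" for e
    using eigenvalue_cmod_square[OF assms(2) left that] by (metis norm_ge_zero real_sqrt_unique)
  with unimodular show "(\<forall>i<n. \<forall>j<n. cmod (M $$ (i,j)) = 1) \<and>
     (\<forall>ev. eigenvalue M ev \<longrightarrow> cmod ev = sqrt (real n))" by blast
next
  assume "(\<forall>i<n. \<forall>j<n. cmod (M $$ (i,j)) = 1) \<and>
     (\<forall>ev. eigenvalue M ev \<longrightarrow> cmod ev = sqrt (real n))"
  with assms show "complex_hadamard n M"
    unfolding complex_hadamard_def
    using mult_conj_transpose_eq_smult_one_if_eigenvalues[of n M] by simp
qed

end
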